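(* Let $\mathbb{C}$ be a locally small category and let $\mathbb{C}_{\mathit{fin}}$ be a full subcategory of $\mathbb{C}$ satisfying (C1)–(C5) below. Let $F \in \mathrm{Ob}(\mathbb{C})$ be homogeneous, locally finite, universal for $\mathbb{C}_{\mathit{fin}}$, and such that its automorphisms are finitely separated. Then the group $\mathrm{Aut}(F)$ endowed with the topology $\tau_F$ is extremely amenable if and only if $\mathbb{C}_{\mathit{fin}}$ has the Ramsey property.
   Context: Write $A \to B$ if $\hom(A,B) \neq \varnothing$. Conditions: (C1) all morphisms of $\mathbb{C}$ are monomorphisms; (C2) $\mathrm{Ob}(\mathbb{C}_{\mathit{fin}})$ is a set; (C3) $\hom(A,B)$ is finite for all $A,B \in \mathrm{Ob}(\mathbb{C}_{\mathit{fin}})$; (C4) for every $F \in \mathrm{Ob}(\mathbb{C})$ there is $A \in \mathrm{Ob}(\mathbb{C}_{\mathit{fin}})$ with $A \to F$; (C5) for every $B \in \mathrm{Ob}(\mathbb{C}_{\mathit{fin}})$ the set $\{A \in \mathrm{Ob}(\mathbb{C}_{\mathit{fin}}) : A \to B\}$ is finite. $F$ is homogeneous if for all $A \in \mathrm{Ob}(\mathbb{C}_{\mathit{fin}})$ and $e_1,e_2 \in \hom(A,F)$ there is $g \in \mathrm{Aut}(F)$ with $g\cdot e_1 = e_2$. $F$ is universal for $\mathbb{C}_{\mathit{fin}}$ if $A \to F$ for all $A \in \mathrm{Ob}(\mathbb{C}_{\mathit{fin}})$. $F$ is locally finite if for all $A,B \in \mathrm{Ob}(\mathbb{C}_{\mathit{fin}})$,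 $e \in \hom(A,F)$, $f \in \hom(B,F)$ there exist $D \in \mathrm{Ob}(\mathbb{C}_{\mathit{fin}})$, $r \in \hom(D,F)$, $p \in \hom(A,D)$, $q \in \hom(B,D)$ with $r\cdot p = e$, $r \cdot q = f$, such that moreover for every $H \in \mathrm{Ob}(\mathbb{C})$ and $r' \in \hom(H,F)$, $p' \in \hom(A,H)$, $q' \in \hom(B,H)$ with $r'\cdot p' = e$, $r'\cdot q' = f$ there is $s \in \hom(D,H)$ with $r'\cdot s = r$, $s \cdot p = p'$, $s\cdot q = q'$. The automorphisms of $F$ are finitely separated if for all $f \neq g$ in $\mathrm{Aut}(F)$ there are $A \in \mathrm{Ob}(\mathbb{C}_{\mathit{fin}})$ and $e \in \hom(A,F)$ with $f\cdot e \neq g\cdot e$. $\tau_F$ is the topology on $\mathrm{Aut}(F)$ generated by the sets $N_F(e_1,e_2) = \{f \in \mathrm{Aut}(F) : f\cdot e_1 = e_2\}$, for $A \in \mathrm{Ob}(\mathbb{C}_{\mathit{fin}})$ and $e_1,e_2 \in \hom(A,F)$. A topological group $G$ is extremely amenable if every continuous action of $G$ on a compact Hausdorff space has a point fixed by all of $G$. A category $\mathbb{D}$ has the Ramsey property if for every integer $k \ge 2$ and all $A,B \in \mathrm{Ob}(\mathbb{D})$ there is $C \in \mathrm{Ob}(\mathbb{D})$ such that for every map $\chi : \hom(A,C) \to \{0,\dots,k-1\}$ there is $w \in \hom(B,C)$ with $|\chi(w\cdot\hom(A,B))| \le 1$, where $w \cdot X = \{w\cdot x : x \in X\}$. *)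

theory Defs
  imports "HOL-Analysis.Analysis"
begin

text \<open>A (locally small) category: objects Ob, hom-sets hom A B, composition cmp g f
  (g after f, written g.f in the paper), identities ident.\<close>

definition category ::
  "'o set \<Rightarrow> ('o \<Rightarrow> 'o \<Rightarrow> 'm set) \<Rightarrow> ('m \<Rightarrow> 'm \<Rightarrow> 'm) \<Rightarrow> ('o \<Rightarrow> 'm) \<Rightarrow> bool" where
  "category Ob hom cmp ident \<longleftrightarrow>
     (\<forall>A B f. f \<in> hom A B \<longrightarrow> A \<in> Ob \<and> B \<in> Ob) \<and>
     (\<forall>A B A' B' f. f \<in> hom A B \<and> f \<in> hom A' B' \<longrightarrow> A = A' \<and> B = B') \<and>
     (\<forall>A\<in>Ob. ident A \<in> hom A A) \<and>
     (\<forall>A B C f g. f \<in> hom A B \<and> g \<in> hom B C \<longrightarrow> cmp g f \<in> hom A C) \<and>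
     (\<forall>A B C D f g h. f \<in> hom A B \<and> g \<in> hom B C \<and> h \<in> hom C D \<longrightarrow>
        cmp h (cmp g f) = cmp (cmp h g) f) \<and>
     (\<forall>A B f. f \<in> hom A B \<longrightarrow> cmp (ident B) f = f \<and> cmp f (ident A) = f)"

definition monomorphism ::
  "'o set \<Rightarrow> ('o \<Rightarrow> 'o \<Rightarrow> 'm set) \<Rightarrow> ('m \<Rightarrow> 'm \<Rightarrow> 'm) \<Rightarrow> 'o \<Rightarrow> 'o \<Rightarrow> 'm \<Rightarrow> bool" where
  "monomorphism Ob hom cmp A B f \<longleftrightarrow> f \<in> hom A B \<and>
     (\<forall>X\<in>Ob. \<forall>g\<in>hom X A. \<forall>h\<in>hom X A. cmp f g = cmp f h \<longrightarrow> g = h)"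

text \<open>Conditions (C1)-(C5) for the full subcategory with object set Obfin
  (its hom-sets are those of the ambient category). (C2) is automatic in HOL.\<close>

definition C1 where
  "C1 Ob hom cmp \<longleftrightarrow> (\<forall>A\<in>Ob. \<forall>B\<in>Ob. \<forall>f\<in>hom A B. monomorphism Ob hom cmp A B f)"

definition C2 :: "'o set \<Rightarrow> bool" where
  "C2 Obfin \<longleftrightarrow> True"

definition C3 :: "'o set \<Rightarrow> ('o \<Rightarrow> 'o \<Rightarrow> 'm set) \<Rightarrow> bool" where
  "C3 Obfin hom \<longleftrightarrow> (\<forall>A\<in>Obfin. \<forall>B\<in>Obfin. finite (hom A B))"

definition C4 :: "'o set \<Rightarrow> 'o set \<Rightarrow> ('o \<Rightarrow> 'o \<Rightarrow> 'm set) \<Rightarrow> bool" where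
  "C4 Ob Obfin hom \<longleftrightarrow> (\<forall>F\<in>Ob. \<exists>A\<in>Obfin. hom A F \<noteq> {})"

definition C5 :: "'o set \<Rightarrow> ('o \<Rightarrow> 'o \<Rightarrow> 'm set) \<Rightarrow> bool" where
  "C5 Obfin hom \<longleftrightarrow> (\<forall>B\<in>Obfin. finite {A\<in>Obfin. hom A B \<noteq> {}})"

definition Aut ::
  "('o \<Rightarrow> 'o \<Rightarrow> 'm set) \<Rightarrow> ('m \<Rightarrow> 'm \<Rightarrow> 'm) \<Rightarrow> ('o \<Rightarrow> 'm) \<Rightarrow> 'o \<Rightarrow> 'm set" where
  "Aut hom cmp ident F =
     {f \<in> hom F F. \<exists>g\<in>hom F F. cmp g f = ident F \<and> cmp f g = ident F}"

definition homogeneous where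
  "homogeneous Obfin hom cmp ident F \<longleftrightarrow>
     (\<forall>A\<in>Obfin. \<forall>e1\<in>hom A F. \<forall>e2\<in>hom A F. \<exists>g\<in>Aut hom cmp ident F. cmp g e1 = e2)"

definition universal where
  "universal Obfin hom F \<longleftrightarrow> (\<forall>A\<in>Obfin. hom A F \<noteq> {})"

definition locally_finite where
  "locally_finite Ob Obfin hom cmp F \<longleftrightarrow>
     (\<forall>A\<in>Obfin. \<forall>B\<in>Obfin. \<forall>e\<in>hom A F. \<forall>f\<in>hom B F.
       \<exists>D\<in>Obfin. \<exists>r\<in>hom D F. \<exists>p\<in>hom A D. \<exists>q\<in>hom B D.
         cmp r p = e \<and> cmp r q = f \<and>
         (\<forall>H\<in>Ob. \<forall>r'\<in>hom H F. \<forall>p'\<in>hom A H. \<forall>q'\<in>hom B H.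
            cmp r' p' = e \<and> cmp r' q' = f \<longrightarrow>
            (\<exists>s\<in>hom D H. cmp r' s = r \<and> cmp s p = p' \<and> cmp s q = q')))"

definition finitely_separated where
  "finitely_separated Obfin hom cmp ident F \<longleftrightarrow>
     (\<forall>f\<in>Aut hom cmp ident F. \<forall>g\<in>Aut hom cmp ident F. f \<noteq> g \<longrightarrow>
        (\<exists>A\<in>Obfin. \<exists>e\<in>hom A F. cmp f e \<noteq> cmp g e))"

definition N_F where
  "N_F hom cmp ident F e1 e2 = {f \<in> Aut hom cmp ident F. cmp f e1 = e2}"

definition tau_F where
  "tau_F Obfin hom cmp ident F = topology_generated_by
     {N_F hom cmp ident F e1 e2 | A e1 e2. A \<in> Obfin \<and> e1 \<in> hom A F \<and> e2 \<in> hom A F}"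

text \<open>Extreme amenability of a topological group (G, gmult, gone) with topology T, tested
  on all (nonempty) compact Hausdorff spaces whose points are of type 'x.\<close>
definition extremely_amenable ::
  "'x itself \<Rightarrow> 'g set \<Rightarrow> ('g \<Rightarrow> 'g \<Rightarrow> 'g) \<Rightarrow> 'g \<Rightarrow> 'g topology \<Rightarrow> bool" where
  "extremely_amenable _ G gmult gone T \<longleftrightarrow>
     (\<forall>(X :: 'x topology) (act :: 'g \<Rightarrow> 'x \<Rightarrow> 'x).
        compact_space X \<and> Hausdorff_space X \<and> topspace X \<noteq> {} \<and>
        (\<forall>g\<in>G. \<forall>x\<in>topspace X. act g x \<in> topspace X) \<and>
        (\<forall>x\<in>topspace X. act gone x = x) \<and>
        (\<forall>g\<in>G. \<forall>h\<in>G. \<forall>x\<in>topspace X. act (gmult g h) x = act g (act h x)) \<and>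
        continuous_map (prod_topology T X) X (\<lambda>(g, x). act g x)
        \<longrightarrow> (\<exists>x\<in>topspace X. \<forall>g\<in>G. act g x = x))"

definition Ramsey_property ::
  "'o set \<Rightarrow> ('o \<Rightarrow> 'o \<Rightarrow> 'm set) \<Rightarrow> ('m \<Rightarrow> 'm \<Rightarrow> 'm) \<Rightarrow> bool" where
  "Ramsey_property Obfin hom cmp \<longleftrightarrow>
     (\<forall>k::nat. k \<ge> 2 \<longrightarrow> (\<forall>A\<in>Obfin. \<forall>B\<in>Obfin. \<exists>C\<in>Obfin.
        \<forall>col \<in> (hom A C \<rightarrow> {..<k}). \<exists>w\<in>hom B C.
          card (col ` ((\<lambda>x. cmp w x) ` hom A B)) \<le> 1))"

end

(* Write G for Aut F with the topology tau_F. Its basic neighbourhoods of the identity are the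
   stabilizers N e e of embeddings e of finite objects, and by local finiteness every finite
   intersection of them contains a single such stabilizer N r r.

   Ramsey property implies extreme amenability: a continuous action on a compact Hausdorff space
   has a fixed point as soon as, for every open cover and finite set of group elements, some member
   of the cover contains a point together with its translates. Compactness and continuity give an
   embedding r : D -> F and a finite cover whose members are each moved by N r r into a member of
   the given cover. Color every embedding g r by a member of the finite cover containing
   inv g x0; the Ramsey property, carried over to embeddings into F by amalgamation, universality
   and homogeneity, yields g making this coloring constant on finitely many prescribed embeddings,
   and that puts the point inv g x0 and its translates into one member of the cover.

   Extreme amenability implies the Ramsey property: if it fails for A, B and k colors, the
   k-colorings of hom A F without monochromatic copy w hom A B form a closed G-invariant subset of
   a compact product of discrete spaces, nonempty by compactness and amalgamation. A coloring fixed
   by G is constant by homogeneity, a contradiction. The statement tests extreme amenability on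
   spaces of type ('m => nat) set set; fixed points transfer from there to the colorings, of type
   'm => nat, along the injection c |-> {{c}}. *)

theory Submission
  imports Defs "HOL-Algebra.Group"
begin

lemma extremely_amenable_transfer:
  fixes f :: "'x \<Rightarrow> 'y" and G :: "'g set"
  assumes "inj f" and "extremely_amenable TYPE('y) G m e T"
  shows "extremely_amenable TYPE('x) G m e T"
  unfolding extremely_amenable_def
proof (intro allI impI, elim conjE)
  fix X :: "'x topology" and act :: "'g \<Rightarrow> 'x \<Rightarrow> 'x"
  assume X: "compact_space X" "Hausdorff_space X" "topspace X \<noteq> {}"
    and act: "\<forall>g\<in>G. \<forall>x\<in>topspace X. act g x \<in> topspace X" "\<forall>x\<in>topspace X. act e x = x"
      "\<forall>g\<in>G. \<forall>h\<in>G. \<forall>x\<in>topspace X. act (m g h) x = act g (act h x)"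
    and cont: "continuous_map (prod_topology T X) X (\<lambda>(g, x). act g x)"
  define f' where "f' = inv_into UNIV f"
  have f'f [simp]: "f' (f x) = x" for x
    using assms(1) by (simp add: f'_def)
  define Y where "Y = pullback_topology (f ` topspace X) f' X"
  have tY: "topspace Y = f ` topspace X"
    by (auto simp: Y_def topspace_pullback_topology)
  have "continuous_map X Y f"
    unfolding Y_def by (rule continuous_map_pullback') (auto simp: o_def)
  moreover have "continuous_map Y X f'"
    using continuous_map_pullback[OF continuous_map_id] by (simp add: Y_def)
  ultimately have "homeomorphic_maps X Y f f'"
    by (auto simp: homeomorphic_maps_def tY)
  then have XY: "X homeomorphic_space Y"
    using homeomorphic_space_def by blast
  define act' where "act' g y = f (act g (f' y))" for g y
  have "continuous_map (prod_topology T Y) Y (f \<circ> (\<lambda>(g, x). act g x) \<circ> (\<lambda>(g, y). (g, f' y)))"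
    using \<open>continuous_map X Y f\<close> \<open>continuous_map Y X f'\<close> cont
    by (intro continuous_map_compose) (auto simp: continuous_map_prod_top)
  then have "continuous_map (prod_topology T Y) Y (\<lambda>(g, y). act' g y)"
    by (simp add: act'_def o_def case_prod_beta')
  moreover have "compact_space Y" "Hausdorff_space Y" "topspace Y \<noteq> {}"
    using X XY homeomorphic_compact_space homeomorphic_Hausdorff_space tY by auto
  moreover have "\<forall>g\<in>G. \<forall>y\<in>topspace Y. act' g y \<in> topspace Y" "\<forall>y\<in>topspace Y. act' e y = y"
    "\<forall>g\<in>G. \<forall>h\<in>G. \<forall>y\<in>topspace Y. act' (m g h) y = act' g (act' h y)"
    using act by (auto simp: tY act'_def)
  ultimately obtain y where y: "y \<in> topspace Y" "\<forall>g\<in>G. act' g y = y"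
    using assms(2) unfolding extremely_amenable_def by blast
  then obtain x where x: "x \<in> topspace X" "y = f x"
    unfolding tY by blast
  have "act g x = x" if "g \<in> G" for g
    using y(2) that f'f[of "act g x"] unfolding x(2) act'_def by simp
  then show "\<exists>x\<in>topspace X. \<forall>g\<in>G. act g x = x"
    using x(1) by blast
qed

lemma extremely_amenable_fixed_point_in_closed_invariant:
  fixes G :: "'g set" and X :: "'x topology"
  assumes EA: "extremely_amenable TYPE('x) G m e T" and "topspace T \<subseteq> G"
    and X: "compact_space X" "Hausdorff_space X"
    and Y: "closedin X Y" "Y \<noteq> {}"
    and act: "\<And>g x. g \<in> G \<Longrightarrow> x \<in> Y \<Longrightarrow> act g x \<in> Y"
      "\<And>x. x \<in> Y \<Longrightarrow> act e x = x"
      "\<And>g h x. g \<in> G \<Longrightarrow> h \<in> G \<Longrightarrow> x \<in> Y \<Longrightarrow> act (m g h) x = act g (act h x)"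
    and cont: "continuous_map (prod_topology T X) X (\<lambda>(g, x). act g x)"
  obtains x where "x \<in> Y" "\<And>g. g \<in> G \<Longrightarrow> act g x = x"
proof -
  have tY: "topspace (subtopology X Y) = Y"
    using closedin_subset[OF Y(1)] by auto
  have "prod_topology T (subtopology X Y) = subtopology (prod_topology T X) (topspace T \<times> Y)"
    by (simp add: subtopology_Times)
  then have "continuous_map (prod_topology T (subtopology X Y)) X (\<lambda>(g, x). act g x)"
    using continuous_map_from_subtopology[OF cont] by simp
  moreover have "(\<lambda>(g, x). act g x) \<in> topspace (prod_topology T (subtopology X Y)) \<rightarrow> Y"
    using act(1) \<open>topspace T \<subseteq> G\<close> tY by auto
  ultimately have cont_Y: "continuous_map (prod_topology T (subtopology X Y)) (subtopology X Y)
      (\<lambda>(g, x). act g x)"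
    by (simp add: continuous_map_in_subtopology)
  have "\<exists>x\<in>topspace (subtopology X Y). \<forall>g\<in>G. act g x = x"
  proof (rule EA[unfolded extremely_amenable_def, rule_format], intro conjI)
    show "compact_space (subtopology X Y)"
      by (simp add: X(1) Y(1) closedin_compact_space compact_space_subtopology)
    show "Hausdorff_space (subtopology X Y)"
      using Hausdorff_space_subtopology[OF X(2)] .
    show "topspace (subtopology X Y) \<noteq> {}"
      using tY Y(2) by simp
    show "\<forall>g\<in>G. \<forall>x\<in>topspace (subtopology X Y). act g x \<in> topspace (subtopology X Y)"
      using act(1) tY by simp
    show "\<forall>x\<in>topspace (subtopology X Y). act e x = x"
      using act(2) tY by simp
    show "\<forall>g\<in>G. \<forall>h\<in>G. \<forall>x\<in>topspace (subtopology X Y). act (m g h) x = act g (act h x)"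
      using act(3) tY by simp
  qed (rule cont_Y)
  then show thesis
    using that tY by blast
qed

lemma moved_point_separating_neighbourhood:
  assumes X: "Hausdorff_space X" "regular_space X"
    and \<phi>: "continuous_map X X \<phi>" and x: "x \<in> topspace X" "\<phi> x \<noteq> x"
  obtains W where "openin X W" "x \<in> W"
    "disjnt (X closure_of W) (X closure_of (\<phi> ` (X closure_of W)))"
proof -
  have "\<phi> x \<in> topspace X"
    using \<phi> x(1) by (simp add: continuous_map_def Pi_iff)
  then obtain A B where AB: "openin X A" "openin X B" "x \<in> A" "\<phi> x \<in> B" "disjnt A B"
    using X(1)[unfolded Hausdorff_space_def, rule_format,
        OF conjI[OF x(1) conjI[OF _ x(2)[symmetric]]]]
    by blast
  have A': "openin X (A \<inter> {y \<in> topspace X. \<phi> y \<in> B})" "x \<in> A \<inter> {y \<in> topspace X. \<phi> y \<in> B}"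
    using AB x openin_continuous_map_preimage[OF \<phi> AB(2)] by blast+
  obtain W V where W: "openin X W" "closedin X V" "x \<in> W" "W \<subseteq> V"
      "V \<subseteq> A \<inter> {y \<in> topspace X. \<phi> y \<in> B}"
    using X(2)[folded neighbourhood_base_of_closedin, unfolded neighbourhood_base_of, rule_format,
        OF conjI[OF A']]
    by blast
  have "X closure_of W \<subseteq> A"
    using closure_of_minimal[OF W(4,2)] W(5) by blast
  moreover have "\<phi> ` (X closure_of W) \<subseteq> topspace X - A"
    using closure_of_minimal[OF W(4,2)] W(5) AB(5) openin_subset[OF AB(2)]
    by (auto simp: disjnt_def)
  then have "X closure_of (\<phi> ` (X closure_of W)) \<subseteq> topspace X - A"
    using AB(1) by (intro closure_of_minimal) auto
  ultimately have "disjnt (X closure_of W) (X closure_of (\<phi> ` (X closure_of W)))"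
    by (auto simp: disjnt_def)
  with W(1,3) show thesis
    by (rule that)
qed

lemma common_fixed_point_of_compact_Hausdorff:
  fixes X :: "'x topology" and G :: "'g set"
  assumes X: "compact_space X" "Hausdorff_space X"
    and cont: "\<And>g. g \<in> G \<Longrightarrow> continuous_map X X (act g)"
    and osc: "\<And>\<P> \<Gamma>. (\<And>P. P \<in> \<P> \<Longrightarrow> openin X P) \<Longrightarrow> topspace X \<subseteq> \<Union>\<P> \<Longrightarrow>
      finite \<Gamma> \<Longrightarrow> \<Gamma> \<subseteq> G \<Longrightarrow> \<exists>x\<in>topspace X. \<exists>P\<in>\<P>. x \<in> P \<and> (\<forall>g\<in>\<Gamma>. act g x \<in> P)"
  shows "\<exists>x\<in>topspace X. \<forall>g\<in>G. act g x = x"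
proof (rule ccontr)
  assume no_fixed_point: "\<not> ?thesis"
  have act_topspace: "act g x \<in> topspace X" if "g \<in> G" "x \<in> topspace X" for g x
    using cont[OF that(1)] that(2) by (simp add: continuous_map_def Pi_iff)
  have "\<exists>g\<in>G. \<exists>W. openin X W \<and> x \<in> W \<and>
      disjnt (X closure_of W) (X closure_of (act g ` (X closure_of W)))"
    if x: "x \<in> topspace X" for x
  proof -
    obtain g where g: "g \<in> G" "act g x \<noteq> x"
      using no_fixed_point x by blast
    obtain W where "openin X W" "x \<in> W"
      "disjnt (X closure_of W) (X closure_of (act g ` (X closure_of W)))"
      using moved_point_separating_neighbourhood[OF X(2) compact_Hausdorff_imp_regular_space[OF X]
          cont[OF g(1)] x g(2)]
      by blast
    then show ?thesis
      using g(1) by blast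
  qed
  then obtain g W where sep: "\<And>x. x \<in> topspace X \<Longrightarrow> g x \<in> G \<and> openin X (W x) \<and> x \<in> W x \<and>
      disjnt (X closure_of W x) (X closure_of (act (g x) ` (X closure_of W x)))"
    by metis
  define V where "V l = X closure_of W l" for l
  define B where "B l = X closure_of (act (g l) ` V l)" for l
  have "\<exists>\<F>. finite \<F> \<and> \<F> \<subseteq> W ` topspace X \<and> topspace X \<subseteq> \<Union>\<F>"
    using X(1)[unfolded compact_space_alt, rule_format, of "W ` topspace X"] sep by blast
  then obtain L where L: "L \<subseteq> topspace X" "finite L" "topspace X \<subseteq> (\<Union>l\<in>L. W l)"
    using finite_subset_image by (metis (no_types, lifting))
  define \<P> where "\<P> = {P. openin X P \<and> (\<forall>l\<in>L. P \<inter> V l = {} \<or> P \<inter> B l = {})}"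
  have "topspace X \<subseteq> \<Union>\<P>"
  proof
    fix y assume y: "y \<in> topspace X"
    define P where "P = (\<Inter>l\<in>L. if y \<in> V l then topspace X - B l else topspace X - V l) \<inter> topspace X"
    have "openin X P"
      unfolding P_def V_def B_def using L(1,2) by (intro openin_INT) auto
    moreover have "y \<in> P"
      using y L(1) sep by (auto simp: P_def V_def B_def disjnt_def)
    moreover have "P \<inter> V l = {} \<or> P \<inter> B l = {}" if "l \<in> L" for l
    proof (cases "y \<in> V l")
      case True
      then have "P \<subseteq> topspace X - B l"
        using that by (auto simp: P_def)
      then show ?thesis by blast
    next
      case False
      then have "P \<subseteq> topspace X - V l"
        using that by (auto simp: P_def)
      then show ?thesis by blast
    qed
    ultimately show "y \<in> \<Union>\<P>"
      unfolding \<P>_def by blast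
  qed
  then have "\<exists>x\<in>topspace X. \<exists>P\<in>\<P>. x \<in> P \<and> (\<forall>h\<in>g ` L. act h x \<in> P)"
    by (intro osc) (use L(1,2) sep in \<open>auto simp: \<P>_def\<close>)
  then obtain x P where "x \<in> topspace X" "P \<in> \<P>" "x \<in> P" "\<forall>l\<in>L. act (g l) x \<in> P"
    by blast
  moreover obtain l where l: "l \<in> L" "x \<in> W l"
    using L(3) \<open>x \<in> topspace X\<close> by blast
  moreover have "g l \<in> G" "openin X (W l)"
    using sep L(1) l(1) by blast+
  moreover from this have "x \<in> V l"
    using closure_of_subset[OF openin_subset[OF \<open>openin X (W l)\<close>]] l(2) unfolding V_def by blast
  moreover have "act (g l) ` V l \<subseteq> topspace X"
    using act_topspace[OF \<open>g l \<in> G\<close>] closure_of_subset_topspace[of X "W l"] unfolding V_def by blast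
  then have "act (g l) x \<in> B l"
    using closure_of_subset \<open>x \<in> V l\<close> unfolding B_def by blast
  ultimately show False
    unfolding \<P>_def by blast
qed

locale cat =
  fixes Ob :: "'o set" and hom :: "'o \<Rightarrow> 'o \<Rightarrow> 'm set"
    and cmp :: "'m \<Rightarrow> 'm \<Rightarrow> 'm" and ident :: "'o \<Rightarrow> 'm"
  assumes category: "category Ob hom cmp ident"
begin

lemma hom_objects: "f \<in> hom A B \<Longrightarrow> A \<in> Ob \<and> B \<in> Ob"
  using category unfolding category_def by (elim conjE) meson

lemma hom_unique: "f \<in> hom A B \<Longrightarrow> f \<in> hom A' B' \<Longrightarrow> A = A' \<and> B = B'"
  using category unfolding category_def by (elim conjE) meson

lemma ident_hom: "A \<in> Ob \<Longrightarrow> ident A \<in> hom A A"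
  using category unfolding category_def by blast

lemma cmp_hom: "f \<in> hom A B \<Longrightarrow> g \<in> hom B C \<Longrightarrow> cmp g f \<in> hom A C"
  using category unfolding category_def by blast

lemma cmp_assoc:
  "f \<in> hom A B \<Longrightarrow> g \<in> hom B C \<Longrightarrow> h \<in> hom C D \<Longrightarrow> cmp h (cmp g f) = cmp (cmp h g) f"
  using category unfolding category_def by blast

lemma ident_left: "f \<in> hom A B \<Longrightarrow> cmp (ident B) f = f"
  using category unfolding category_def by blast

lemma ident_right: "f \<in> hom A B \<Longrightarrow> cmp f (ident A) = f"
  using category unfolding category_def by blast


lemma Ramsey_property_finite_colors:
  assumes Ramsey: "Ramsey_property Obfin hom cmp" and AB: "A \<in> Obfin" "B \<in> Obfin"
    and K: "finite K"
  obtains C where "C \<in> Obfin"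
    "\<And>col. col \<in> hom A C \<rightarrow> K \<Longrightarrow> \<exists>w\<in>hom B C. card (col ` cmp w ` hom A B) \<le> 1"
proof -
  obtain code where code: "bij_betw code K {0..<card K}"
    using ex_bij_betw_finite_nat[OF K] by blast
  define k where "k = max (card K) 2"
  have "2 \<le> k"
    by (simp add: k_def)
  then obtain C where C: "C \<in> Obfin"
    and Ramsey_C: "\<forall>col\<in>hom A C \<rightarrow> {..<k}. \<exists>w\<in>hom B C. card (col ` cmp w ` hom A B) \<le> 1"
    using Ramsey[unfolded Ramsey_property_def, rule_format, OF _ AB] by blast
  have "\<exists>w\<in>hom B C. card (col ` cmp w ` hom A B) \<le> 1" if col: "col \<in> hom A C \<rightarrow> K" for col
  proof -
    have "code (col x) < k" if "x \<in> hom A C" for x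
    proof -
      have "col x \<in> K"
        using col that by blast
      then show ?thesis
        using bij_betwE[OF code] unfolding k_def by fastforce
    qed
    then have "code \<circ> col \<in> hom A C \<rightarrow> {..<k}"
      by simp
    then obtain w where w: "w \<in> hom B C" "card ((code \<circ> col) ` cmp w ` hom A B) \<le> 1"
      using Ramsey_C by blast
    have "col ` cmp w ` hom A B \<subseteq> K"
      using col cmp_hom[OF _ w(1)] by blast
    then have "card (code ` col ` cmp w ` hom A B) = card (col ` cmp w ` hom A B)"
      by (rule card_image[OF inj_on_subset[OF bij_betw_imp_inj_on[OF code]]])
    with w(2) have "card (col ` cmp w ` hom A B) \<le> 1"
      by (simp add: image_comp)
    with w(1) show ?thesis
      by blast
  qed
  with C show thesis
    by (rule that)
qed

end

locale kpt_setting = cat Ob hom cmp ident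
  for Ob :: "'o set" and hom :: "'o \<Rightarrow> 'o \<Rightarrow> 'm set"
    and cmp :: "'m \<Rightarrow> 'm \<Rightarrow> 'm" and ident :: "'o \<Rightarrow> 'm" +
  fixes Obfin :: "'o set" and F :: 'o
  assumes monic: "C1 Ob hom cmp" and finite_homs: "C3 Obfin hom"
    and finite_subobjects: "C4 Ob Obfin hom"
    and F_Ob: "F \<in> Ob"
    and homogeneous: "homogeneous Obfin hom cmp ident F"
    and locally_finite: "locally_finite Ob Obfin hom cmp F"
    and universal: "universal Obfin hom F"
begin

abbreviation G :: "'m set" where "G \<equiv> Aut hom cmp ident F"

abbreviation \<tau> :: "'m topology" where "\<tau> \<equiv> tau_F Obfin hom cmp ident F"

abbreviation N :: "'m \<Rightarrow> 'm \<Rightarrow> 'm set" where "N \<equiv> N_F hom cmp ident F"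

lemma inj_on_cmp:
  assumes f: "f \<in> hom B C"
  shows "inj_on (cmp f) (hom A B)"
proof (rule inj_onI)
  fix g h assume gh: "g \<in> hom A B" "h \<in> hom A B" "cmp f g = cmp f h"
  have "monomorphism Ob hom cmp B C f"
    using monic hom_objects[OF f] f unfolding C1_def by blast
  then show "g = h"
    using gh hom_objects[OF gh(1)] unfolding monomorphism_def by blast
qed

lemma hom_F_nonempty: "A \<in> Obfin \<Longrightarrow> \<exists>e. e \<in> hom A F"
  using universal unfolding universal_def by blast

lemma homogeneousE:
  assumes "A \<in> Obfin" "e1 \<in> hom A F" "e2 \<in> hom A F"
  obtains g where "g \<in> G" "cmp g e1 = e2"
  using homogeneous assms unfolding homogeneous_def by blast

definition Aut_group :: "'m monoid" where
  "Aut_group = \<lparr>carrier = G, mult = cmp, one = ident F\<rparr>"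

lemma Aut_group_simps [simp]:
  "carrier Aut_group = G" "mult Aut_group = cmp" "one Aut_group = ident F"
  by (simp_all add: Aut_group_def)

lemma Aut_hom: "g \<in> G \<Longrightarrow> g \<in> hom F F"
  by (simp add: Aut_def)

lemma group_Aut_group: "group Aut_group"
proof (rule groupI; simp)
  have idF: "ident F \<in> hom F F"
    by (rule ident_hom[OF F_Ob])
  show "ident F \<in> G"
    using idF ident_left[OF idF] by (auto simp: Aut_def)
  show "cmp (ident F) x = x" if "x \<in> G" for x
    using that ident_left unfolding Aut_def by blast
  show "cmp (cmp x y) z = cmp x (cmp y z)" if "x \<in> G" "y \<in> G" "z \<in> G" for x y z
    using that cmp_assoc[of z F F y F x F] by (simp add: Aut_def)
  show "\<exists>y\<in>G. cmp y x = ident F" if "x \<in> G" for x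
    using that by (auto simp: Aut_def)
  show "cmp x y \<in> G" if x: "x \<in> G" and y: "y \<in> G" for x y
  proof -
    obtain x' y' where inv: "x' \<in> hom F F" "cmp x' x = ident F" "cmp x x' = ident F"
      "y' \<in> hom F F" "cmp y' y = ident F" "cmp y y' = ident F"
      using x y by (auto simp: Aut_def)
    have xF: "x \<in> hom F F" and yF: "y \<in> hom F F"
      using x y by (simp_all add: Aut_def)
    have "cmp (cmp y' x') (cmp x y) = cmp (cmp y' (cmp x' x)) y"
      using cmp_assoc[OF yF xF cmp_hom[OF inv(1,4)]] cmp_assoc[OF xF inv(1,4)] by simp
    also have "\<dots> = ident F"
      using inv ident_right by simp
    finally have "cmp (cmp y' x') (cmp x y) = ident F" .
    moreover have "cmp (cmp x y) (cmp y' x') = cmp x (cmp (cmp y y') x')"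
      using cmp_assoc[OF cmp_hom[OF inv(1,4)] yF xF] cmp_assoc[OF inv(1) inv(4) yF] by simp
    moreover have "cmp x (cmp (cmp y y') x') = ident F"
      using inv ident_left by simp
    ultimately have "cmp (cmp y' x') (cmp x y) = ident F" "cmp (cmp x y) (cmp y' x') = ident F"
      by simp_all
    with inv x y show ?thesis
      by (auto simp: Aut_def intro!: cmp_hom bexI[of _ "cmp y' x'"])
  qed
qed

sublocale Aut: group Aut_group
  by (rule group_Aut_group)

abbreviation Aut_inv :: "'m \<Rightarrow> 'm" where "Aut_inv \<equiv> m_inv Aut_group"

lemma ident_in_Aut: "ident F \<in> G"
  using Aut.one_closed by simp

lemma cmp_in_Aut: "g \<in> G \<Longrightarrow> h \<in> G \<Longrightarrow> cmp g h \<in> G"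
  using Aut.m_closed by simp

lemma Aut_inv_closed: "g \<in> G \<Longrightarrow> Aut_inv g \<in> G"
  using Aut.inv_closed by simp

lemma Aut_inv_hom: "g \<in> G \<Longrightarrow> Aut_inv g \<in> hom F F"
  using Aut.inv_closed Aut_hom by simp

lemma Aut_inv_cancel:
  assumes "g \<in> G" "a \<in> hom A F"
  shows "cmp (Aut_inv g) (cmp g a) = a" "cmp g (cmp (Aut_inv g) a) = a"
  using cmp_assoc[OF assms(2) Aut_hom Aut_inv_hom] cmp_assoc[OF assms(2) Aut_inv_hom Aut_hom]
    Aut.l_inv[of g] Aut.r_inv[of g] ident_left[OF assms(2)] assms(1)
  by simp_all

lemma finite_amalgamation:
  assumes "finite S" "\<forall>s\<in>S. \<exists>A\<in>Obfin. s \<in> hom A F"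
  shows "\<exists>D\<in>Obfin. \<exists>r\<in>hom D F. \<forall>s\<in>S. \<forall>A. s \<in> hom A F \<longrightarrow> (\<exists>p\<in>hom A D. s = cmp r p)"
  using assms
proof (induction S rule: finite_induct)
  case empty
  then show ?case
    using finite_subobjects F_Ob unfolding C4_def by blast
next
  case (insert s S)
  then obtain D r where D: "D \<in> Obfin" "r \<in> hom D F"
    and factor: "\<forall>s\<in>S. \<forall>A. s \<in> hom A F \<longrightarrow> (\<exists>p\<in>hom A D. s = cmp r p)"
    by auto
  obtain X where X: "X \<in> Obfin" "s \<in> hom X F"
    using insert.prems by blast
  obtain D' r' p q where D': "D' \<in> Obfin" "r' \<in> hom D' F" "p \<in> hom D D'" "q \<in> hom X D'"
    "cmp r' p = r" "cmp r' q = s"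
    using locally_finite[unfolded locally_finite_def, rule_format, OF D(1) X(1) D(2) X(2)]
    by blast
  have "\<exists>p'\<in>hom A D'. s' = cmp r' p'" if s': "s' \<in> insert s S" "s' \<in> hom A F" for s' A
  proof (cases "s' = s")
    case True
    then show ?thesis
      using X D' hom_unique s'(2) by blast
  next
    case False
    then obtain p' where "p' \<in> hom A D" "s' = cmp r p'"
      using factor s' by blast
    moreover have "cmp r p' = cmp r' (cmp p p')"
      using cmp_assoc[OF calculation(1) D'(3,2)] D'(5) by simp
    ultimately show ?thesis
      using D'(3) cmp_hom by blast
  qed
  then show ?case
    using D' by blast
qed

lemma N_F_comp_subset:
  assumes "f \<in> G" "r \<in> hom D F" "p \<in> hom A D"
  shows "N r (cmp f r) \<subseteq> N (cmp r p) (cmp f (cmp r p))"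
proof
  fix g assume "g \<in> N r (cmp f r)"
  then have "g \<in> G" "cmp g r = cmp f r"
    by (simp_all add: N_F_def)
  then show "g \<in> N (cmp r p) (cmp f (cmp r p))"
    using cmp_assoc[OF assms(3,2) Aut_hom[OF \<open>g \<in> G\<close>]] cmp_assoc[OF assms(3,2) Aut_hom[OF assms(1)]]
    by (simp add: N_F_def)
qed

lemma topspace_tau: "topspace \<tau> = G"
  unfolding tau_F_def topology_generated_by_topspace
proof
  show "\<Union>{N e1 e2 | A e1 e2. A \<in> Obfin \<and> e1 \<in> hom A F \<and> e2 \<in> hom A F} \<subseteq> G"
    by (auto simp: N_F_def)
  obtain A e where Ae: "A \<in> Obfin" "e \<in> hom A F"
    using finite_subobjects F_Ob unfolding C4_def by blast
  show "G \<subseteq> \<Union>{N e1 e2 | A e1 e2. A \<in> Obfin \<and> e1 \<in> hom A F \<and> e2 \<in> hom A F}"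
  proof
    fix g assume "g \<in> G"
    then have "g \<in> N e (cmp g e)" "cmp g e \<in> hom A F"
      using Ae Aut_hom cmp_hom by (auto simp: N_F_def)
    then show "g \<in> \<Union>{N e1 e2 | A e1 e2. A \<in> Obfin \<and> e1 \<in> hom A F \<and> e2 \<in> hom A F}"
      using Ae by blast
  qed
qed

lemma openin_N: "A \<in> Obfin \<Longrightarrow> e1 \<in> hom A F \<Longrightarrow> e2 \<in> hom A F \<Longrightarrow> openin \<tau> (N e1 e2)"
  unfolding tau_F_def by (rule topology_generated_by_Basis) blast

lemma tau_neighbourhood:
  assumes "openin \<tau> U" "f \<in> U"
  obtains A e where "A \<in> Obfin" "e \<in> hom A F" "N e (cmp f e) \<subseteq> U"
proof -
  have "generate_topology_on {N e1 e2 | A e1 e2. A \<in> Obfin \<and> e1 \<in> hom A F \<and> e2 \<in> hom A F} U"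
    using assms(1) unfolding tau_F_def by (rule openin_topology_generated_by)
  then have "\<forall>f\<in>U \<inter> G. \<exists>A\<in>Obfin. \<exists>e\<in>hom A F. N e (cmp f e) \<subseteq> U"
  proof (induction rule: generate_topology_on.induct)
    case Empty
    then show ?case by simp
  next
    case (Int U1 U2)
    show ?case
    proof
      fix f assume f: "f \<in> U1 \<inter> U2 \<inter> G"
      then obtain A1 e1 A2 e2 where "A1 \<in> Obfin" "e1 \<in> hom A1 F" "N e1 (cmp f e1) \<subseteq> U1"
        "A2 \<in> Obfin" "e2 \<in> hom A2 F" "N e2 (cmp f e2) \<subseteq> U2"
        using Int.IH by blast
      moreover have "\<exists>D\<in>Obfin. \<exists>r\<in>hom D F. \<forall>s\<in>{e1, e2}. \<forall>A. s \<in> hom A F \<longrightarrow>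
          (\<exists>p\<in>hom A D. s = cmp r p)"
        using calculation by (intro finite_amalgamation) auto
      then obtain D r where D: "D \<in> Obfin" "r \<in> hom D F"
        and factor: "\<forall>s\<in>{e1, e2}. \<forall>A. s \<in> hom A F \<longrightarrow> (\<exists>p\<in>hom A D. s = cmp r p)"
        by blast
      moreover have "N r (cmp f r) \<subseteq> N e (cmp f e)" if "e \<in> {e1, e2}" "e \<in> hom A F" for e A
        using factor that N_F_comp_subset[OF _ D(2)] f by blast
      ultimately show "\<exists>A\<in>Obfin. \<exists>e\<in>hom A F. N e (cmp f e) \<subseteq> U1 \<inter> U2"
        by blast
    qed
  next
    case (UN K)
    then show ?case by blast
  next
    case (Basis U)
    then obtain A e1 e2 where "U = N e1 e2" "A \<in> Obfin" "e1 \<in> hom A F"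
      by blast
    then show ?case
      by (auto simp: N_F_def)
  qed
  moreover have "f \<in> G"
    using assms openin_subset topspace_tau by blast
  ultimately show thesis
    using assms(2) that by blast
qed

lemma Ramsey_embeddings:
  assumes Ramsey: "Ramsey_property Obfin hom cmp"
    and A: "A \<in> Obfin" and S: "finite S" "S \<subseteq> hom A F"
    and c: "finite K" "c \<in> hom A F \<rightarrow> K"
  obtains g where "g \<in> G" "\<And>a b. a \<in> S \<Longrightarrow> b \<in> S \<Longrightarrow> c (cmp g a) = c (cmp g b)"
proof -
  have "\<exists>D\<in>Obfin. \<exists>u\<in>hom D F. \<forall>s\<in>S. \<forall>A'. s \<in> hom A' F \<longrightarrow> (\<exists>p\<in>hom A' D. s = cmp u p)"
    using S A by (intro finite_amalgamation) auto
  then obtain D u where D: "D \<in> Obfin" "u \<in> hom D F"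
    and factor: "\<forall>s\<in>S. \<forall>A'. s \<in> hom A' F \<longrightarrow> (\<exists>p\<in>hom A' D. s = cmp u p)"
    by blast
  obtain C where C: "C \<in> Obfin"
    and Ramsey_C: "\<And>col. col \<in> hom A C \<rightarrow> K \<Longrightarrow> \<exists>w\<in>hom D C. card (col ` cmp w ` hom A D) \<le> 1"
    using Ramsey_property_finite_colors[OF Ramsey A D(1) c(1)] by blast
  obtain v where v: "v \<in> hom C F"
    using hom_F_nonempty[OF C] by blast
  define col where "col x = c (cmp v x)" for x
  have "col \<in> hom A C \<rightarrow> K"
    using c(2) cmp_hom[OF _ v] unfolding col_def by blast
  then obtain w where w: "w \<in> hom D C" "card (col ` cmp w ` hom A D) \<le> 1"
    using Ramsey_C by blast
  have "finite (hom A D)"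
    using finite_homs A D(1) unfolding C3_def by blast
  then have "\<forall>i\<in>col ` cmp w ` hom A D. \<forall>j\<in>col ` cmp w ` hom A D. i = j"
    using card_le_Suc0_iff_eq w(2) by (metis One_nat_def finite_imageI)
  then have col_const: "col (cmp w p) = col (cmp w q)" if "p \<in> hom A D" "q \<in> hom A D" for p q
    using that by blast
  obtain g where g: "g \<in> G" "cmp g u = cmp v w"
    using homogeneousE[OF D(1,2) cmp_hom[OF w(1) v]] by blast
  have g_factor: "c (cmp g (cmp u p)) = col (cmp w p)" if "p \<in> hom A D" for p
    using cmp_assoc[OF that D(2) Aut_hom[OF g(1)]] cmp_assoc[OF that w(1) v] g(2)
    unfolding col_def by simp
  have "c (cmp g a) = c (cmp g b)" if ab: "a \<in> S" "b \<in> S" for a b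
  proof -
    obtain p q where "p \<in> hom A D" "a = cmp u p" "q \<in> hom A D" "b = cmp u q"
      using factor[rule_format, OF ab(1) subsetD[OF S(2) ab(1)]]
        factor[rule_format, OF ab(2) subsetD[OF S(2) ab(2)]] by blast
    then show ?thesis
      using g_factor col_const[of p q] by simp
  qed
  with g(1) show thesis
    by (rule that)
qed

lemma stabilizer_refines_open_cover:
  fixes X :: "'x topology" and act :: "'m \<Rightarrow> 'x \<Rightarrow> 'x"
  assumes X: "compact_space X"
    and act_ident: "\<And>x. x \<in> topspace X \<Longrightarrow> act (ident F) x = x"
    and cont: "continuous_map (prod_topology \<tau> X) X (\<lambda>(g, x). act g x)"
    and \<P>: "\<And>P. P \<in> \<P> \<Longrightarrow> openin X P" "topspace X \<subseteq> \<Union>\<P>"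
  obtains \<W> D r where "finite \<W>" "topspace X \<subseteq> \<Union>\<W>" "D \<in> Obfin" "r \<in> hom D F"
    "\<And>W. W \<in> \<W> \<Longrightarrow> \<exists>P\<in>\<P>. \<forall>h\<in>N r r. act h ` W \<subseteq> P"
proof -
  define good where "good W \<longleftrightarrow> openin X W \<and>
    (\<exists>e. (\<exists>A\<in>Obfin. e \<in> hom A F) \<and> (\<exists>P\<in>\<P>. \<forall>h\<in>N e e. act h ` W \<subseteq> P))" for W
  have "\<exists>W. good W \<and> y \<in> W" if y: "y \<in> topspace X" for y
  proof -
    obtain P where P: "P \<in> \<P>" "y \<in> P"
      using \<P>(2) y by blast
    have "openin (prod_topology \<tau> X) {z \<in> topspace (prod_topology \<tau> X). (\<lambda>(g, x). act g x) z \<in> P}"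
      using openin_continuous_map_preimage[OF cont \<P>(1)[OF P(1)]] .
    moreover have "(ident F, y) \<in> {z \<in> topspace (prod_topology \<tau> X). (\<lambda>(g, x). act g x) z \<in> P}"
      using ident_in_Aut y act_ident P(2) by (simp add: topspace_tau)
    ultimately have "\<exists>U W. openin \<tau> U \<and> openin X W \<and> ident F \<in> U \<and> y \<in> W \<and>
      U \<times> W \<subseteq> {z \<in> topspace (prod_topology \<tau> X). (\<lambda>(g, x). act g x) z \<in> P}"
      by (rule openin_prod_topology_alt[THEN iffD1, rule_format])
    then obtain U W where UW: "openin \<tau> U" "openin X W" "ident F \<in> U" "y \<in> W"
      "U \<times> W \<subseteq> {z \<in> topspace (prod_topology \<tau> X). (\<lambda>(g, x). act g x) z \<in> P}"
      by blast
    obtain A e where Ae: "A \<in> Obfin" "e \<in> hom A F" "N e (cmp (ident F) e) \<subseteq> U"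
      using tau_neighbourhood[OF UW(1,3)] by blast
    have "act h ` W \<subseteq> P" if "h \<in> N e e" for h
    proof -
      have "h \<in> U"
        using that Ae(3) ident_left[OF Ae(2)] by auto
      then have "act h w \<in> P" if "w \<in> W" for w
        using subsetD[OF UW(5), of "(h, w)"] that by simp
      then show ?thesis
        by blast
    qed
    then have "\<exists>e. (\<exists>A\<in>Obfin. e \<in> hom A F) \<and> (\<exists>P\<in>\<P>. \<forall>h\<in>N e e. act h ` W \<subseteq> P)"
      using Ae(1,2) P(1) by (intro exI[of _ e] conjI bexI[of _ A] bexI[of _ P] ballI)
    then show ?thesis
      unfolding good_def using UW(2,4) by blast
  qed
  then have "topspace X \<subseteq> \<Union>(Collect good)"
    by blast
  moreover have "\<forall>W\<in>Collect good. openin X W"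
    by (simp add: good_def)
  ultimately have "\<exists>\<W>. finite \<W> \<and> \<W> \<subseteq> Collect good \<and> topspace X \<subseteq> \<Union>\<W>"
    using X[unfolded compact_space_alt, rule_format, of "Collect good"] by blast
  then obtain \<W> where \<W>: "finite \<W>" "\<W> \<subseteq> Collect good" "topspace X \<subseteq> \<Union>\<W>"
    by blast
  then have "\<forall>W\<in>\<W>. \<exists>e. (\<exists>A\<in>Obfin. e \<in> hom A F) \<and> (\<exists>P\<in>\<P>. \<forall>h\<in>N e e. act h ` W \<subseteq> P)"
    unfolding good_def by auto
  then obtain e where e: "\<forall>W\<in>\<W>. (\<exists>A\<in>Obfin. e W \<in> hom A F) \<and>
      (\<exists>P\<in>\<P>. \<forall>h\<in>N (e W) (e W). act h ` W \<subseteq> P)"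
    by (rule bchoice[THEN exE]) blast
  have "\<exists>D\<in>Obfin. \<exists>r\<in>hom D F. \<forall>s\<in>e ` \<W>. \<forall>A. s \<in> hom A F \<longrightarrow> (\<exists>p\<in>hom A D. s = cmp r p)"
    using \<W>(1) e by (intro finite_amalgamation) auto
  then obtain D r where D: "D \<in> Obfin" "r \<in> hom D F"
    and factor: "\<forall>s\<in>e ` \<W>. \<forall>A. s \<in> hom A F \<longrightarrow> (\<exists>p\<in>hom A D. s = cmp r p)"
    by blast
  have "\<exists>P\<in>\<P>. \<forall>h\<in>N r r. act h ` W \<subseteq> P" if W: "W \<in> \<W>" for W
  proof -
    obtain A p where "e W \<in> hom A F" "p \<in> hom A D" "e W = cmp r p"
      using e factor W by blast
    then have "N r r \<subseteq> N (e W) (e W)"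
      using N_F_comp_subset[OF ident_in_Aut D(2), of p A] ident_left[OF D(2)]
        ident_left[of "e W" A F]
      by simp
    moreover obtain P where "P \<in> \<P>" "\<forall>h\<in>N (e W) (e W). act h ` W \<subseteq> P"
      using e W by blast
    ultimately show ?thesis
      by (intro bexI[of _ P]) auto
  qed
  then show thesis
    using that \<W>(1,3) D by blast
qed

(* Up to the stabilizer N r r, the point inv g x0 depends only on the embedding cmp g r, so
   cmp g r can be colored by a member of the cover containing such a point. *)
lemma orbit_coloring:
  fixes X :: "'x topology" and act :: "'m \<Rightarrow> 'x \<Rightarrow> 'x"
  assumes D: "D \<in> Obfin" "r \<in> hom D F" and \<W>: "topspace X \<subseteq> \<Union>\<W>" and x0: "x0 \<in> topspace X"
    and act: "\<And>g x. g \<in> G \<Longrightarrow> x \<in> topspace X \<Longrightarrow> act g x \<in> topspace X"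
      "\<And>g h x. g \<in> G \<Longrightarrow> h \<in> G \<Longrightarrow> x \<in> topspace X \<Longrightarrow> act (cmp g h) x = act g (act h x)"
  obtains color where "color \<in> hom D F \<rightarrow> \<W>"
    "\<And>g. g \<in> G \<Longrightarrow> \<exists>h\<in>N r r. \<exists>w\<in>color (cmp g r). act (Aut_inv g) x0 = act h w"
proof -
  define color where
    "color a = (SOME W. W \<in> \<W> \<and> (\<exists>g\<in>G. cmp g r = a \<and> act (Aut_inv g) x0 \<in> W))" for a
  have color: "color a \<in> \<W> \<and> (\<exists>g\<in>G. cmp g r = a \<and> act (Aut_inv g) x0 \<in> color a)"
    if a: "a \<in> hom D F" for a
  proof -
    obtain g where g: "g \<in> G" "cmp g r = a"
      using homogeneousE[OF D a] by blast
    then obtain W where "W \<in> \<W>" "act (Aut_inv g) x0 \<in> W"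
      using \<W> act(1)[OF Aut_inv_closed[OF g(1)] x0] by blast
    then have "\<exists>W. W \<in> \<W> \<and> (\<exists>g\<in>G. cmp g r = a \<and> act (Aut_inv g) x0 \<in> W)"
      using g by blast
    then show ?thesis
      unfolding color_def by (rule someI_ex)
  qed
  then have "color \<in> hom D F \<rightarrow> \<W>"
    by blast
  moreover have "\<exists>h\<in>N r r. \<exists>w\<in>color (cmp g r). act (Aut_inv g) x0 = act h w"
    if g: "g \<in> G" for g
  proof -
    obtain g' where g': "g' \<in> G" "cmp g' r = cmp g r" "act (Aut_inv g') x0 \<in> color (cmp g r)"
      using color cmp_hom[OF D(2) Aut_hom[OF g]] by blast
    define h where "h = cmp (Aut_inv g) g'"
    have h: "h \<in> G"
      unfolding h_def using g g'(1) by (simp add: cmp_in_Aut Aut_inv_closed)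
    have "cmp h r = r"
      unfolding h_def using cmp_assoc[OF D(2) Aut_hom[OF g'(1)] Aut_inv_hom[OF g]] g'(2)
        Aut_inv_cancel(1)[OF g D(2)] by simp
    then have hN: "h \<in> N r r"
      using h by (simp add: N_F_def)
    have "act (Aut_inv g) x0 = act h (act (Aut_inv g') x0)"
      using act(2)[OF h Aut_inv_closed[OF g'(1)] x0] Aut.m_assoc[of "Aut_inv g" g' "Aut_inv g'"]
        Aut.r_inv[of g'] Aut.r_one[of "Aut_inv g"] g g'(1) Aut_inv_closed
      unfolding h_def by simp
    with hN g'(3) show ?thesis
      by (intro bexI[of _ h] bexI[of _ "act (Aut_inv g') x0"])
  qed
  ultimately show thesis
    by (rule that)
qed

lemma Ramsey_imp_orbit_in_open_cover:
  fixes X :: "'x topology" and act :: "'m \<Rightarrow> 'x \<Rightarrow> 'x"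
  assumes Ramsey: "Ramsey_property Obfin hom cmp"
    and X: "compact_space X" "topspace X \<noteq> {}"
    and act: "\<And>g x. g \<in> G \<Longrightarrow> x \<in> topspace X \<Longrightarrow> act g x \<in> topspace X"
      "\<And>x. x \<in> topspace X \<Longrightarrow> act (ident F) x = x"
      "\<And>g h x. g \<in> G \<Longrightarrow> h \<in> G \<Longrightarrow> x \<in> topspace X \<Longrightarrow> act (cmp g h) x = act g (act h x)"
    and cont: "continuous_map (prod_topology \<tau> X) X (\<lambda>(g, x). act g x)"
    and \<P>: "\<And>P. P \<in> \<P> \<Longrightarrow> openin X P" "topspace X \<subseteq> \<Union>\<P>"
    and \<Gamma>: "finite \<Gamma>" "\<Gamma> \<subseteq> G"
  shows "\<exists>x\<in>topspace X. \<exists>P\<in>\<P>. x \<in> P \<and> (\<forall>g\<in>\<Gamma>. act g x \<in> P)"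
proof -
  obtain \<W> D r where \<W>: "finite \<W>" "topspace X \<subseteq> \<Union>\<W>" and D: "D \<in> Obfin" "r \<in> hom D F"
    and stab: "\<And>W. W \<in> \<W> \<Longrightarrow> \<exists>P\<in>\<P>. \<forall>h\<in>N r r. act h ` W \<subseteq> P"
    using stabilizer_refines_open_cover[OF X(1) act(2) cont \<P>] by blast
  obtain x0 where x0: "x0 \<in> topspace X"
    using X(2) by blast
  obtain color where color: "color \<in> hom D F \<rightarrow> \<W>"
    and translate: "\<And>g. g \<in> G \<Longrightarrow> \<exists>h\<in>N r r. \<exists>w\<in>color (cmp g r). act (Aut_inv g) x0 = act h w"
    using orbit_coloring[OF D \<W>(2) x0 act(1,3)] by blast
  define S where "S = insert r ((\<lambda>\<gamma>. cmp (Aut_inv \<gamma>) r) ` \<Gamma>)"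
  have S: "finite S" "S \<subseteq> hom D F"
    unfolding S_def using \<Gamma> D(2) cmp_hom Aut_inv_hom by auto
  obtain g where g: "g \<in> G"
    and same_color: "\<And>a b. a \<in> S \<Longrightarrow> b \<in> S \<Longrightarrow> color (cmp g a) = color (cmp g b)"
    using Ramsey_embeddings[OF Ramsey D(1) S \<W>(1) color] by blast
  obtain P where P: "P \<in> \<P>" "\<forall>h\<in>N r r. act h ` color (cmp g r) \<subseteq> P"
    using stab color cmp_hom[OF D(2) Aut_hom[OF g]] by blast
  have in_P: "act (Aut_inv g') x0 \<in> P" if "g' \<in> G" "color (cmp g' r) = color (cmp g r)" for g'
    using translate[OF that(1)] P(2) that(2) by blast
  define x where "x = act (Aut_inv g) x0"
  have "act \<gamma> x \<in> P" if \<gamma>: "\<gamma> \<in> \<Gamma>" for \<gamma>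
  proof -
    have \<gamma>G: "\<gamma> \<in> G"
      using \<Gamma>(2) \<gamma> by blast
    have "cmp (cmp g (Aut_inv \<gamma>)) r = cmp g (cmp (Aut_inv \<gamma>) r)"
      using cmp_assoc[OF D(2) Aut_inv_hom[OF \<gamma>G] Aut_hom[OF g]] by simp
    then have "color (cmp (cmp g (Aut_inv \<gamma>)) r) = color (cmp g r)"
      using same_color[of "cmp (Aut_inv \<gamma>) r" r] \<gamma> by (simp add: S_def)
    then have "act (Aut_inv (cmp g (Aut_inv \<gamma>))) x0 \<in> P"
      by (rule in_P[OF cmp_in_Aut[OF g Aut_inv_closed[OF \<gamma>G]]])
    moreover have "Aut_inv (cmp g (Aut_inv \<gamma>)) = cmp \<gamma> (Aut_inv g)"
      using Aut.inv_mult_group[of g "Aut_inv \<gamma>"] g \<gamma>G Aut_inv_closed by simp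
    ultimately show ?thesis
      unfolding x_def using act(3)[OF \<gamma>G Aut_inv_closed[OF g] x0] by simp
  qed
  moreover have "x \<in> P"
    unfolding x_def using in_P g by blast
  moreover have "x \<in> topspace X"
    unfolding x_def using act(1)[OF Aut_inv_closed[OF g] x0] .
  ultimately show ?thesis
    using P(1) by blast
qed

lemma Ramsey_imp_extremely_amenable:
  assumes Ramsey: "Ramsey_property Obfin hom cmp"
  shows "extremely_amenable TYPE('x) G cmp (ident F) \<tau>"
  unfolding extremely_amenable_def
proof (intro allI impI, elim conjE)
  fix X :: "'x topology" and act :: "'m \<Rightarrow> 'x \<Rightarrow> 'x"
  assume X: "compact_space X" "Hausdorff_space X" "topspace X \<noteq> {}"
    and act: "\<forall>g\<in>G. \<forall>x\<in>topspace X. act g x \<in> topspace X" "\<forall>x\<in>topspace X. act (ident F) x = x"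
      "\<forall>g\<in>G. \<forall>h\<in>G. \<forall>x\<in>topspace X. act (cmp g h) x = act g (act h x)"
    and cont: "continuous_map (prod_topology \<tau> X) X (\<lambda>(g, x). act g x)"
  have cont_g: "continuous_map X X (act g)" if "g \<in> G" for g
  proof -
    have "continuous_map X (prod_topology \<tau> X) (\<lambda>x. (g, x))"
      using that by (intro continuous_map_pairedI) (auto simp: topspace_tau)
    from continuous_map_compose[OF this cont] show ?thesis
      by (simp add: o_def)
  qed
  show "\<exists>x\<in>topspace X. \<forall>g\<in>G. act g x = x"
  proof (rule common_fixed_point_of_compact_Hausdorff[OF X(1,2) cont_g])
    fix \<P> \<Gamma> assume "\<And>P. P \<in> \<P> \<Longrightarrow> openin X P" "topspace X \<subseteq> \<Union>\<P>" "finite \<Gamma>" "\<Gamma> \<subseteq> G"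
    then show "\<exists>x\<in>topspace X. \<exists>P\<in>\<P>. x \<in> P \<and> (\<forall>g\<in>\<Gamma>. act g x \<in> P)"
      using act by (intro Ramsey_imp_orbit_in_open_cover[OF Ramsey X(1,3) _ _ _ cont]) auto
  qed
qed

definition colorings :: "'o \<Rightarrow> nat \<Rightarrow> ('m \<Rightarrow> nat) topology" where
  "colorings A k = product_topology (\<lambda>_. discrete_topology {..<k}) (hom A F)"

definition recolor :: "'o \<Rightarrow> 'm \<Rightarrow> ('m \<Rightarrow> nat) \<Rightarrow> 'm \<Rightarrow> nat" where
  "recolor A g c = restrict (\<lambda>a. c (cmp (Aut_inv g) a)) (hom A F)"

definition non_monochromatic :: "'o \<Rightarrow> 'o \<Rightarrow> nat \<Rightarrow> 'm set \<Rightarrow> ('m \<Rightarrow> nat) set" where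
  "non_monochromatic A B k W =
     {c \<in> topspace (colorings A k). \<forall>w\<in>W. 1 < card (c ` cmp w ` hom A B)}"

lemma topspace_colorings: "topspace (colorings A k) = hom A F \<rightarrow>\<^sub>E {..<k}"
  by (simp add: colorings_def)

lemma compact_Hausdorff_colorings: "compact_space (colorings A k)" "Hausdorff_space (colorings A k)"
  by (simp_all add: colorings_def compact_space_product_topology compact_space_discrete_topology
      Hausdorff_space_product_topology)

lemma openin_colorings_coordinate:
  assumes "a \<in> hom A F"
  shows "openin (colorings A k) {c \<in> topspace (colorings A k). c a \<in> U}"
proof -
  have "openin (colorings A k) {c \<in> topspace (colorings A k). c a \<in> U \<inter> {..<k}}"
    unfolding colorings_def
    by (rule openin_continuous_map_preimage[OF continuous_map_product_projection[OF assms]]) simp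
  moreover have "{c \<in> topspace (colorings A k). c a \<in> U \<inter> {..<k}} =
      {c \<in> topspace (colorings A k). c a \<in> U}"
    using assms by (auto simp: topspace_colorings)
  ultimately show ?thesis
    by simp
qed

lemma openin_colorings_cylinder:
  assumes "finite E" "E \<subseteq> hom A F"
  shows "openin (colorings A k) {c \<in> topspace (colorings A k). \<forall>a\<in>E. c a = c0 a}"
proof -
  have "{c \<in> topspace (colorings A k). \<forall>a\<in>E. c a = c0 a} =
      (\<Inter>a\<in>E. {c \<in> topspace (colorings A k). c a \<in> {c0 a}}) \<inter> topspace (colorings A k)"
    by auto
  moreover have "openin (colorings A k) \<dots>"
    using assms by (intro openin_INT openin_colorings_coordinate) auto
  ultimately show ?thesis
    by simp
qed

lemma recolor_colorings:
  assumes "g \<in> G" "c \<in> topspace (colorings A k)"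
  shows "recolor A g c \<in> topspace (colorings A k)"
  using assms cmp_hom[OF _ Aut_inv_hom] by (auto simp: recolor_def topspace_colorings)

lemma recolor_ident:
  assumes "c \<in> topspace (colorings A k)"
  shows "recolor A (ident F) c = c"
proof -
  have "Aut_inv (ident F) = ident F"
    using Aut.inv_one by simp
  then show ?thesis
    using assms ident_left by (auto simp: recolor_def topspace_colorings PiE_def extensional_def)
qed

lemma recolor_cmp:
  assumes "g \<in> G" "h \<in> G"
  shows "recolor A (cmp g h) c = recolor A g (recolor A h c)"
proof -
  have "cmp (Aut_inv (cmp g h)) a = cmp (Aut_inv h) (cmp (Aut_inv g) a)"
    if "a \<in> hom A F" for a
    using Aut.inv_mult_group[of g h] assms
      cmp_assoc[OF that Aut_inv_hom[OF assms(1)] Aut_inv_hom[OF assms(2)]]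
    by simp
  then show ?thesis
    using assms cmp_hom[OF _ Aut_inv_hom] by (auto simp: recolor_def)
qed

lemma continuous_map_recolor:
  assumes A: "A \<in> Obfin"
  shows "continuous_map (prod_topology \<tau> (colorings A k)) (colorings A k) (\<lambda>(g, c). recolor A g c)"
proof -
  let ?X = "prod_topology \<tau> (colorings A k)"
  have coordinate: "continuous_map ?X (discrete_topology {..<k}) (\<lambda>(g, c). c (cmp (Aut_inv g) a))"
    if a: "a \<in> hom A F" for a
    unfolding continuous_map_def
  proof (intro conjI allI impI)
    show "(\<lambda>(g, c). c (cmp (Aut_inv g) a)) \<in> topspace ?X \<rightarrow> topspace (discrete_topology {..<k})"
      using a cmp_hom[OF _ Aut_inv_hom] by (auto simp: topspace_tau topspace_colorings)
    fix U
    text \<open>g moves the embedding b to a exactly when the inverse of g moves a to b.\<close>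
    have "{z \<in> topspace ?X. (\<lambda>(g, c). c (cmp (Aut_inv g) a)) z \<in> U} =
        (\<Union>b\<in>hom A F. N b a \<times> {c \<in> topspace (colorings A k). c b \<in> U})" (is "?L = ?R")
    proof
      show "?L \<subseteq> ?R"
      proof
        fix z assume z: "z \<in> ?L"
        obtain g c where gc: "z = (g, c)"
          by (cases z)
        with z have "g \<in> G" "c \<in> topspace (colorings A k)" "c (cmp (Aut_inv g) a) \<in> U"
          by (auto simp: topspace_tau)
        then show "z \<in> ?R"
          unfolding gc using cmp_hom[OF a Aut_inv_hom] Aut_inv_cancel(2)[OF _ a]
          by (intro UN_I[of "cmp (Aut_inv g) a"]) (auto simp: N_F_def)
      qed
      show "?R \<subseteq> ?L"
      proof
        fix z assume "z \<in> ?R"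
        then obtain b g c where "z = (g, c)" "b \<in> hom A F" "g \<in> N b a"
          "c \<in> topspace (colorings A k)" "c b \<in> U"
          by blast
        then show "z \<in> ?L"
          using Aut_inv_cancel(1) by (auto simp: N_F_def topspace_tau)
      qed
    qed
    moreover have "openin ?X (\<Union>b\<in>hom A F. N b a \<times> {c \<in> topspace (colorings A k). c b \<in> U})"
      using openin_N[OF A _ a] openin_colorings_coordinate
      by (intro openin_Union) (auto simp: openin_prod_Times_iff)
    ultimately show "openin ?X {z \<in> topspace ?X. (\<lambda>(g, c). c (cmp (Aut_inv g) a)) z \<in> U}"
      by simp
  qed
  have eq: "(\<lambda>z. (\<lambda>(g, c). recolor A g c) z a) = (\<lambda>(g, c). c (cmp (Aut_inv g) a))"
    if "a \<in> hom A F" for a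
    using that by (auto simp: recolor_def)
  have "continuous_map ?X (product_topology (\<lambda>_. discrete_topology {..<k}) (hom A F))
      (\<lambda>(g, c). recolor A g c)"
    unfolding continuous_map_componentwise
  proof (intro conjI ballI)
    show "(\<lambda>(g, c). recolor A g c) ` topspace ?X \<subseteq> extensional (hom A F)"
      by (auto simp: recolor_def)
    fix a assume "a \<in> hom A F"
    then show "continuous_map ?X (discrete_topology {..<k}) (\<lambda>z. (\<lambda>(g, c). recolor A g c) z a)"
      unfolding eq[OF \<open>a \<in> hom A F\<close>] by (rule coordinate)
  qed
  then show ?thesis
    by (simp add: colorings_def[of A k])
qed

lemma closedin_non_monochromatic:
  assumes "A \<in> Obfin" "B \<in> Obfin" "W \<subseteq> hom B F"
  shows "closedin (colorings A k) (non_monochromatic A B k W)"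
  unfolding closedin_def
proof
  show "non_monochromatic A B k W \<subseteq> topspace (colorings A k)"
    by (auto simp: non_monochromatic_def)
  show "openin (colorings A k) (topspace (colorings A k) - non_monochromatic A B k W)"
  proof (subst openin_subopen, intro ballI)
    fix c0 assume c0: "c0 \<in> topspace (colorings A k) - non_monochromatic A B k W"
    then obtain w where w: "w \<in> W" "card (c0 ` cmp w ` hom A B) \<le> 1"
      by (auto simp: non_monochromatic_def not_less)
    let ?Z = "{c \<in> topspace (colorings A k). \<forall>a\<in>cmp w ` hom A B. c a = c0 a}"
    have "finite (cmp w ` hom A B)"
      using finite_homs assms(1,2) unfolding C3_def by blast
    moreover have "cmp w ` hom A B \<subseteq> hom A F"
      using w(1) assms(3) cmp_hom by blast
    ultimately have "openin (colorings A k) ?Z"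
      by (rule openin_colorings_cylinder)
    moreover have "c ` cmp w ` hom A B = c0 ` cmp w ` hom A B" if "c \<in> ?Z" for c
      using that by (auto simp: image_iff)
    then have "?Z \<subseteq> topspace (colorings A k) - non_monochromatic A B k W"
      using w by (auto simp: non_monochromatic_def)
    ultimately show "\<exists>T. openin (colorings A k) T \<and> c0 \<in> T \<and>
        T \<subseteq> topspace (colorings A k) - non_monochromatic A B k W"
      using c0 by blast
  qed
qed

lemma recolor_non_monochromatic:
  assumes "g \<in> G" "c \<in> non_monochromatic A B k (hom B F)"
  shows "recolor A g c \<in> non_monochromatic A B k (hom B F)"
proof -
  have "recolor A g c ` cmp w ` hom A B = c ` cmp (cmp (Aut_inv g) w) ` hom A B"
    if w: "w \<in> hom B F" for w
  proof -
    have "recolor A g c (cmp w x) = c (cmp (cmp (Aut_inv g) w) x)" if "x \<in> hom A B" for x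
      using cmp_assoc[OF that w Aut_inv_hom[OF assms(1)]] cmp_hom[OF that w]
      by (simp add: recolor_def)
    then show ?thesis
      by (simp add: image_image cong: image_cong)
  qed
  moreover have "cmp (Aut_inv g) w \<in> hom B F" if "w \<in> hom B F" for w
    using cmp_hom[OF that Aut_inv_hom[OF assms(1)]] .
  ultimately show ?thesis
    using assms recolor_colorings by (auto simp: non_monochromatic_def)
qed

text \<open>A bad coloring of hom(A, D) is transported along an embedding r of D into F.\<close>
lemma non_monochromatic_finite_nonempty:
  assumes A: "A \<in> Obfin" and B: "B \<in> Obfin" and k: "0 < k"
    and bad: "\<forall>C\<in>Obfin. \<exists>col\<in>hom A C \<rightarrow> {..<k}. \<forall>w\<in>hom B C. 1 < card (col ` cmp w ` hom A B)"
    and W: "finite W" "W \<subseteq> hom B F"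
  shows "non_monochromatic A B k W \<noteq> {}"
proof -
  have "\<exists>D\<in>Obfin. \<exists>r\<in>hom D F. \<forall>s\<in>W. \<forall>A'. s \<in> hom A' F \<longrightarrow> (\<exists>p\<in>hom A' D. s = cmp r p)"
    using W B by (intro finite_amalgamation) auto
  then obtain D r where D: "D \<in> Obfin" "r \<in> hom D F"
    and factor: "\<forall>s\<in>W. \<forall>A'. s \<in> hom A' F \<longrightarrow> (\<exists>p\<in>hom A' D. s = cmp r p)"
    by blast
  obtain col where col: "col \<in> hom A D \<rightarrow> {..<k}"
    and col_bad: "\<forall>q\<in>hom B D. 1 < card (col ` cmp q ` hom A B)"
    using bad D(1) by blast
  define c where "c = restrict
    (\<lambda>a. if a \<in> cmp r ` hom A D then col (inv_into (hom A D) (cmp r) a) else 0) (hom A F)"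
  have c_r: "c (cmp r b) = col b" if "b \<in> hom A D" for b
    using that cmp_hom[OF that D(2)] inv_into_f_f[OF inj_on_cmp[OF D(2)]] by (simp add: c_def)
  have "c a \<in> {..<k}" if a: "a \<in> hom A F" for a
  proof (cases "a \<in> cmp r ` hom A D")
    case True
    then obtain b where "b \<in> hom A D" "a = cmp r b"
      by blast
    then show ?thesis
      using c_r col by auto
  next
    case False
    then show ?thesis
      using a k by (simp add: c_def)
  qed
  then have "c \<in> topspace (colorings A k)"
    unfolding topspace_colorings PiE_iff by (simp add: c_def)
  moreover have "1 < card (c ` cmp w ` hom A B)" if w: "w \<in> W" for w
  proof -
    obtain p where p: "p \<in> hom B D" "w = cmp r p"
      using factor[rule_format, OF w subsetD[OF W(2) w]] by blast
    have "c (cmp w x) = col (cmp p x)" if "x \<in> hom A B" for x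
      using cmp_assoc[OF that p(1) D(2)] c_r[OF cmp_hom[OF that p(1)]] p(2) by simp
    then have "c ` cmp w ` hom A B = col ` cmp p ` hom A B"
      by (simp add: image_image cong: image_cong)
    then show ?thesis
      using col_bad p(1) by simp
  qed
  ultimately show ?thesis
    unfolding non_monochromatic_def by blast
qed

lemma non_monochromatic_nonempty:
  assumes A: "A \<in> Obfin" and B: "B \<in> Obfin" and k: "0 < k"
    and bad: "\<forall>C\<in>Obfin. \<exists>col\<in>hom A C \<rightarrow> {..<k}. \<forall>w\<in>hom B C. 1 < card (col ` cmp w ` hom A B)"
  shows "non_monochromatic A B k (hom B F) \<noteq> {}"
proof -
  let ?M = "\<lambda>w. non_monochromatic A B k {w}"
  have "\<Inter>\<F> \<noteq> {}" if \<F>: "finite \<F>" "\<F> \<subseteq> ?M ` hom B F" for \<F>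
  proof -
    obtain W where W: "W \<subseteq> hom B F" "finite W" "\<F> = ?M ` W"
      using finite_subset_image[OF \<F>] by blast
    have "non_monochromatic A B k W \<subseteq> \<Inter>\<F>"
      unfolding W(3) non_monochromatic_def by auto
    then show ?thesis
      using non_monochromatic_finite_nonempty[OF A B k bad W(2,1)] by blast
  qed
  then have fip: "\<forall>\<F>. finite \<F> \<and> \<F> \<subseteq> ?M ` hom B F \<longrightarrow> \<Inter>\<F> \<noteq> {}"
    by blast
  have closed: "\<forall>C\<in>?M ` hom B F. closedin (colorings A k) C"
    using closedin_non_monochromatic[OF A B] by auto
  have "\<Inter>(?M ` hom B F) \<noteq> {}"
    using compact_Hausdorff_colorings(1)[unfolded compact_space_fip, rule_format,
        OF conjI[OF closed fip]] .
  moreover obtain w0 where "w0 \<in> hom B F"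
    using hom_F_nonempty[OF B] by blast
  then have "\<Inter>(?M ` hom B F) \<subseteq> non_monochromatic A B k (hom B F)"
    by (auto simp: non_monochromatic_def)
  ultimately show ?thesis
    by blast
qed

lemma recolor_fixed_imp_constant:
  assumes A: "A \<in> Obfin" and c: "\<And>g. g \<in> G \<Longrightarrow> recolor A g c = c"
    and a: "a \<in> hom A F" "a' \<in> hom A F"
  shows "c a = c a'"
proof -
  obtain g where g: "g \<in> G" "cmp g a' = a"
    using homogeneousE[OF A a(2,1)] by blast
  have "recolor A g c a = c a'"
    using a g Aut_inv_cancel(1)[OF g(1) a(2)] by (simp add: recolor_def)
  then show ?thesis
    using c[OF g(1)] by simp
qed

lemma extremely_amenable_imp_Ramsey:
  assumes EA: "extremely_amenable TYPE('m \<Rightarrow> nat) G cmp (ident F) \<tau>"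
  shows "Ramsey_property Obfin hom cmp"
proof (rule ccontr)
  assume "\<not> ?thesis"
  then obtain k :: nat and A B where k: "2 \<le> k" and AB: "A \<in> Obfin" "B \<in> Obfin"
    and bad: "\<forall>C\<in>Obfin. \<exists>col\<in>hom A C \<rightarrow> {..<k}. \<forall>w\<in>hom B C. 1 < card (col ` cmp w ` hom A B)"
    unfolding Ramsey_property_def by (auto simp: not_le)
  have "topspace \<tau> \<subseteq> G"
    by (simp add: topspace_tau)
  moreover have "non_monochromatic A B k (hom B F) \<noteq> {}"
    using k by (intro non_monochromatic_nonempty[OF AB _ bad]) simp
  moreover have "recolor A (ident F) c = c" if "c \<in> non_monochromatic A B k (hom B F)" for c
    using that by (auto simp: non_monochromatic_def intro: recolor_ident)
  ultimately obtain c where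
    c: "c \<in> non_monochromatic A B k (hom B F)" "\<And>g. g \<in> G \<Longrightarrow> recolor A g c = c"
    using extremely_amenable_fixed_point_in_closed_invariant[where act = "recolor A", OF EA _
        compact_Hausdorff_colorings closedin_non_monochromatic[OF AB order_refl] _
        recolor_non_monochromatic _ recolor_cmp continuous_map_recolor[OF AB(1)]]
    by blast
  obtain w where w: "w \<in> hom B F"
    using hom_F_nonempty[OF AB(2)] by blast
  obtain a0 where a0: "a0 \<in> hom A F"
    using hom_F_nonempty[OF AB(1)] by blast
  have "c ` cmp w ` hom A B \<subseteq> {c a0}"
    using recolor_fixed_imp_constant[OF AB(1) c(2) _ a0] cmp_hom[OF _ w] by blast
  then have "card (c ` cmp w ` hom A B) \<le> 1"
    using card_mono[of "{c a0}"] by fastforce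
  with c(1) w show False
    by (auto simp: non_monochromatic_def)
qed

end

theorem theorem4p5:
  fixes Ob Obfin :: "'o set"
    and hom :: "'o \<Rightarrow> 'o \<Rightarrow> 'm set"
    and cmp :: "'m \<Rightarrow> 'm \<Rightarrow> 'm"
    and ident :: "'o \<Rightarrow> 'm"
    and F :: 'o
  assumes cat: "category Ob hom cmp ident"
    and sub: "Obfin \<subseteq> Ob"
    and "C1 Ob hom cmp" and "C2 Obfin" and "C3 Obfin hom"
    and "C4 Ob Obfin hom" and "C5 Obfin hom"
    and F: "F \<in> Ob"
    and "homogeneous Obfin hom cmp ident F"
    and "locally_finite Ob Obfin hom cmp F"
    and "universal Obfin hom F"
    and "finitely_separated Obfin hom cmp ident F"
  shows "(Ramsey_property Obfin hom cmp \<longrightarrow>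
            extremely_amenable TYPE('x) (Aut hom cmp ident F) cmp (ident F)
              (tau_F Obfin hom cmp ident F))
       \<and> (extremely_amenable TYPE(('m \<Rightarrow> nat) set set) (Aut hom cmp ident F) cmp (ident F)
              (tau_F Obfin hom cmp ident F)
            \<longrightarrow> Ramsey_property Obfin hom cmp)"
proof -
  interpret kpt_setting Ob hom cmp ident Obfin F
    by unfold_locales (use assms in simp_all)
  have "inj (\<lambda>c :: 'm \<Rightarrow> nat. {{c}})"
    by (auto intro: injI)
  note embed_colorings = extremely_amenable_transfer[OF this]
  show ?thesis
    using Ramsey_imp_extremely_amenable extremely_amenable_imp_Ramsey[OF embed_colorings] by blast
qed

end
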